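(* Let $\Gamma$ be a $C^2$ curve with arc-length parametrization $\boldsymbol X(s)$ satisfying $\boldsymbol X(0)=\boldsymbol 0$ and $\partial_s\boldsymbol X(0)=(1,0)^T$, with unit normal field $\boldsymbol n$, and fix $\lambda\ge0$. For $R>0$ let $\mathcal O$ be the disc of radius $R$ centered at $\boldsymbol 0$ and choose collocation points $\boldsymbol q^{(1)}_k=\boldsymbol X(\eta^{(1)}_kR)$, $k=1,2,3$, with $\eta^{(1)}_k$ distinct; $\boldsymbol q^{(2)}_k=\boldsymbol X(\eta^{(2)}_kR)$, $k=1,2$, with $\eta^{(2)}_1\neq\eta^{(2)}_2$; $\boldsymbol q^{(3)}=\boldsymbol X(\eta^{(3)}R)$; and $\boldsymbol q^{(4)}_k=R\boldsymbol\xi_k$, $k=1,2,3$, with $\boldsymbol\xi_1,\boldsymbol\xi_2,\boldsymbol\xi_3$ non-collinear, where all constants $\eta^{(d)}_k,\boldsymbol\xi_k$ are independent of $R$ and all points lie in $\mathcal O$. Then there exists $R_0>0$ such that for all $R\le R_0$ the $15\times15$ collocation matrix $\boldsymbol M=\boldsymbol M(R)$ defined in the context is invertible and $\|\boldsymbol M^{-1}\|_\infty$ is bounded uniformly in $R\in(0,R_0]$.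
   Context: Let $\phi_1=1,\phi_2=x,\phi_3=y,\phi_4=x^2,\phi_5=y^2,\phi_6=xy$. Unknowns are $\boldsymbol c_1,\dots,\boldsymbol c_6\in\mathbb R^2$ (components $c_j^{(1)},c_j^{(2)}$) and $d_1,d_2,d_3\in\mathbb R$, i.e. a vector in $\mathbb R^{15}$, representing $\hat{\boldsymbol v}(\boldsymbol x)=\sum_{j=1}^6\boldsymbol c_j\phi_j(\boldsymbol x/R)$, $\hat q(\boldsymbol x)=\sum_{j=1}^3\frac{d_j}{R}\phi_j(\boldsymbol x/R)$. The matrix $\boldsymbol M$ is the matrix of the linear map sending the unknowns to the 15 quantities: (i) for $k=1,2,3$: $\sum_{j=1}^6\phi_j(\boldsymbol q^{(1)}_k/R)\boldsymbol c_j\in\mathbb R^2$; (ii) for $k=1,2$: $\sum_{j=1}^6\big(\boldsymbol c_j\nabla\phi_j^T+\nabla\phi_j\boldsymbol c_j^T\big)(\boldsymbol q^{(2)}_k/R)\,\boldsymbol n(\boldsymbol q^{(2)}_k)-\sum_{j=1}^3d_j\phi_j(\boldsymbol q^{(2)}_k/R)\boldsymbol n(\boldsymbol q^{(2)}_k)\in\mathbb R^2$; (iii) $\sum_{j=1}^6\big((\Delta-\lambda)\phi_j\big)(\boldsymbol q^{(3)}/R)\,\boldsymbol c_j-\sum_{j=1}^3\nabla\phi_j(\boldsymbol q^{(3)}/R)\,d_j\in\mathbb R^2$; (iv) for $k=1,2,3$: $\sum_{j=1}^6\big(\partial_x\phi_j\,c_j^{(1)}+\partial_y\phi_j\,c_j^{(2)}\big)(\boldsymbol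 q^{(4)}_k/R)\in\mathbb R$ (with a fixed ordering of rows and columns). $\|\cdot\|_\infty$ is the maximum-row-sum matrix norm. These encode collocation of the Dirichlet condition, traction condition, Brinkman momentum equation and divergence-free condition for a local Cauchy problem on $\Gamma\cap\mathcal O$. *)

theory Defs
  imports "HOL-Analysis.Analysis" "Jordan_Normal_Form.Matrix"
begin

definition phi :: "nat \<Rightarrow> real^2 \<Rightarrow> real" where
  "phi j p = (let x = p$1; y = p$2 in
     if j = 1 then 1 else if j = 2 then x else if j = 3 then y
     else if j = 4 then x^2 else if j = 5 then y^2 else x * y)"

definition dphi :: "nat \<Rightarrow> nat \<Rightarrow> real^2 \<Rightarrow> real" where
  "dphi a j p = (let x = p$1; y = p$2 in
     if a = 1 then
       (if j = 1 then 0 else if j = 2 then 1 else if j = 3 then 0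
        else if j = 4 then 2 * x else if j = 5 then 0 else y)
     else
       (if j = 1 then 0 else if j = 2 then 0 else if j = 3 then 1
        else if j = 4 then 0 else if j = 5 then 2 * y else x))"

definition lapphi :: "nat \<Rightarrow> real^2 \<Rightarrow> real" where
  "lapphi j p = (if j = 4 \<or> j = 5 then 2 else 0)"

definition cmp :: "real^2 \<Rightarrow> nat \<Rightarrow> real" where
  "cmp v a = (if a = 1 then v$1 else v$2)"

text \<open>Ordering of unknowns (columns 0..14): column 2(j-1)+(m-1) is c_j^(m) (j=1..6, m=1,2),
  column 11+j is d_j (j=1..3).
  Ordering of equations (rows 0..14): rows 2(k-1)+(a-1) (k=1,2,3) Dirichlet, component a;
  rows 6+2(k-1)+(a-1) (k=1,2) traction, component a; rows 10+(a-1) momentum, component a;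
  rows 12+(k-1) (k=1,2,3) divergence.
  Parameters: X arc-length parametrisation, nn the unit normal as a function of arc length
  (so n(q) at q = X(s) is nn s), lam = lambda, eta1 k / eta2 k (k from 0) the constants
  eta^(1)_{k+1}, eta^(2)_{k+1}, eta3 = eta^(3), xi k = xi_{k+1}.\<close>

definition colloc_entry ::
  "(real \<Rightarrow> real^2) \<Rightarrow> (real \<Rightarrow> real^2) \<Rightarrow> real \<Rightarrow> (nat \<Rightarrow> real) \<Rightarrow> (nat \<Rightarrow> real)
   \<Rightarrow> real \<Rightarrow> (nat \<Rightarrow> real^2) \<Rightarrow> real \<Rightarrow> nat \<Rightarrow> nat \<Rightarrow> real" where
  "colloc_entry X nn lam eta1 eta2 eta3 xi R i j =
    (let jj = j div 2 + 1; m = j mod 2 + 1; dd = j - 11 in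
     if i < 6 then
       (let k = i div 2; a = i mod 2 + 1; p = (1 / R) *\<^sub>R X (eta1 k * R) in
        if j < 12 then (if a = m then phi jj p else 0) else 0)
     else if i < 10 then
       (let k = (i - 6) div 2; a = (i - 6) mod 2 + 1;
            p = (1 / R) *\<^sub>R X (eta2 k * R); nv = nn (eta2 k * R) in
        if j < 12 then
          (if a = m then dphi 1 jj p * nv$1 + dphi 2 jj p * nv$2 else 0) + dphi a jj p * cmp nv m
        else - phi dd p * cmp nv a)
     else if i < 12 then
       (let a = i - 10 + 1; p = (1 / R) *\<^sub>R X (eta3 * R) in
        if j < 12 then (if a = m then lapphi jj p - lam * phi jj p else 0)
        else - dphi a dd p)
     else
       (let k = i - 12; p = (1 / R) *\<^sub>R (R *\<^sub>R xi k) in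
        if j < 12 then dphi m jj p else 0))"

definition colloc_matrix ::
  "(real \<Rightarrow> real^2) \<Rightarrow> (real \<Rightarrow> real^2) \<Rightarrow> real \<Rightarrow> (nat \<Rightarrow> real) \<Rightarrow> (nat \<Rightarrow> real)
   \<Rightarrow> real \<Rightarrow> (nat \<Rightarrow> real^2) \<Rightarrow> real \<Rightarrow> real mat" where
  "colloc_matrix X nn lam eta1 eta2 eta3 xi R =
     mat 15 15 (\<lambda>(i, j). colloc_entry X nn lam eta1 eta2 eta3 xi R i j)"

definition norm_inf_mat :: "real mat \<Rightarrow> real" where
  "norm_inf_mat B = Max ((\<lambda>i. \<Sum>j<dim_col B. \<bar>B $$ (i, j)\<bar>) ` {..<dim_row B})"

end

theory Submission
  imports Defs "Jordan_Normal_Form.Determinant"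
begin

text \<open>After rescaling by 1/R, the curve collocation points X(eta R)/R tend to (eta, 0) as
  R -> 0 (since X(0) = 0 and X'(0) = e_1), the traction normals tend to n(0) = (0, s) with s /= 0,
  and the points xi_k do not move, so M(R) converges entrywise to a fixed matrix M_0. Its
  homogeneous system is solved in stages: the Dirichlet rows at three distinct abscissae give
  c_1 = c_2 = c_4 = 0 (Vandermonde); the traction rows at two distinct abscissae give
  c_3^(1) = c_6^(1) = 0, d_1 = 2 c_3^(2) and d_2 = 2 c_6^(2); the divergence rows at three
  non-collinear points kill the affine function div v; the momentum rows then give
  c_5^(1) = d_3 = 0. So det M_0 /= 0, and since inversion is continuous (adjugate formula),
  M(R)^-1 -> M_0^-1, which yields invertibility and a uniform bound on the inverses for small R.\<close>

lemma affine_zero_at_two_points: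
  fixes a b x0 x1 :: real
  assumes "x0 \<noteq> x1" "a + x0 * b = 0" "a + x1 * b = 0"
  shows "a = 0 \<and> b = 0"
proof -
  have "(x0 - x1) * b = (a + x0 * b) - (a + x1 * b)" by (simp add: algebra_simps)
  with assms have "b = 0" by simp
  with assms show ?thesis by simp
qed

lemma quadratic_zero_at_three_points:
  fixes a b c x0 x1 x2 :: real
  assumes "x0 \<noteq> x1" "x0 \<noteq> x2" "x1 \<noteq> x2"
    and "a + x0 * b + x0\<^sup>2 * c = 0" "a + x1 * b + x1\<^sup>2 * c = 0" "a + x2 * b + x2\<^sup>2 * c = 0"
  shows "a = 0 \<and> b = 0 \<and> c = 0"
proof -
  have "(x0 - x1) * (b + (x0 + x1) * c) = 0" "(x0 - x2) * (b + (x0 + x2) * c) = 0"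
    using assms(4-6) by (simp_all add: algebra_simps power2_eq_square)
  with assms(1,2) have "b + (x0 + x1) * c = 0" "b + (x0 + x2) * c = 0" by simp_all
  with assms(3) have "c = 0" using affine_zero_at_two_points[of x1 x2 "b + x0 * c" c]
    by (simp add: algebra_simps)
  with assms(4) \<open>b + (x0 + x1) * c = 0\<close> show ?thesis by simp
qed

lemma affine_zero_on_noncollinear:
  fixes p0 p1 p2 :: "real^2" and a b c :: real
  assumes "\<not> collinear {p0, p1, p2}"
    and zero: "\<forall>p\<in>{p0, p1, p2}. a + b * p$1 + c * p$2 = 0"
  shows "a = 0 \<and> b = 0 \<and> c = 0"
proof (cases "b = 0 \<and> c = 0")
  case True
  with zero[rule_format, of p0] show ?thesis by simp
next
  case False
  then have bc: "b\<^sup>2 + c\<^sup>2 \<noteq> 0" by (simp add: sum_power2_eq_zero_iff)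
  have "collinear {p0, p1, p2}"
    unfolding collinear_def
  proof (intro exI[of _ "vector [- c, b]"] ballI)
    fix x y assume "x \<in> {p0, p1, p2}" "y \<in> {p0, p1, p2}"
    with zero have "a + b * x$1 + c * x$2 = 0" "a + b * y$1 + c * y$2 = 0" by blast+
    then have e: "b * (x$1 - y$1) + c * (x$2 - y$2) = 0" by (simp add: algebra_simps)
    define t where "t = (b * (x$2 - y$2) - c * (x$1 - y$1)) / (b\<^sup>2 + c\<^sup>2)"
    have "(x$1 - y$1) * (b\<^sup>2 + c\<^sup>2) = - c * (b * (x$2 - y$2) - c * (x$1 - y$1)) + b * 0"
      "(x$2 - y$2) * (b\<^sup>2 + c\<^sup>2) = b * (b * (x$2 - y$2) - c * (x$1 - y$1)) + c * 0"
      unfolding e[symmetric] by (simp_all add: algebra_simps power2_eq_square)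
    with bc have "x$1 - y$1 = t * - c" "x$2 - y$2 = t * b"
      unfolding t_def by (simp_all add: field_simps)
    then show "\<exists>t. x - y = t *\<^sub>R vector [- c, b]"
      by (intro exI[of _ t]) (simp add: Finite_Cartesian_Product.vec_eq_iff forall_2 vector_2)
  qed
  with assms(1) show ?thesis by simp
qed

definition colloc_entry_at ::
  "(nat \<Rightarrow> real^2) \<Rightarrow> (nat \<Rightarrow> real^2) \<Rightarrow> (nat \<Rightarrow> real^2) \<Rightarrow> real^2 \<Rightarrow> (nat \<Rightarrow> real^2)
   \<Rightarrow> real \<Rightarrow> nat \<Rightarrow> nat \<Rightarrow> real" where
 "colloc_entry_at P1 P2 N2 P3 P4 lam i j =
    (let jj = j div 2 + 1; m = j mod 2 + 1; dd = j - 11 in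
     if i < 6 then
       (let k = i div 2; a = i mod 2 + 1; p = P1 k in
        if j < 12 then (if a = m then phi jj p else 0) else 0)
     else if i < 10 then
       (let k = (i - 6) div 2; a = (i - 6) mod 2 + 1; p = P2 k; nv = N2 k in
        if j < 12 then
          (if a = m then dphi 1 jj p * nv$1 + dphi 2 jj p * nv$2 else 0) + dphi a jj p * cmp nv m
        else - phi dd p * cmp nv a)
     else if i < 12 then
       (let a = i - 10 + 1; p = P3 in
        if j < 12 then (if a = m then lapphi jj p - lam * phi jj p else 0)
        else - dphi a dd p)
     else
       (let k = i - 12; p = P4 k in
        if j < 12 then dphi m jj p else 0))"

lemma colloc_entry_eq_at:
  "colloc_entry X nn lam eta1 eta2 eta3 xi R i j =
    colloc_entry_at (\<lambda>k. (1/R) *\<^sub>R X (eta1 k * R)) (\<lambda>k. (1/R) *\<^sub>R X (eta2 k * R))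
      (\<lambda>k. nn (eta2 k * R)) ((1/R) *\<^sub>R X (eta3 * R)) (\<lambda>k. (1/R) *\<^sub>R (R *\<^sub>R xi k)) lam i j"
  unfolding colloc_entry_def colloc_entry_at_def ..

definition colloc_limit_matrix ::
  "real \<Rightarrow> (nat \<Rightarrow> real) \<Rightarrow> (nat \<Rightarrow> real) \<Rightarrow> real \<Rightarrow> (nat \<Rightarrow> real^2) \<Rightarrow> real \<Rightarrow> real mat" where
  "colloc_limit_matrix lam eta1 eta2 eta3 xi s = mat 15 15 (\<lambda>(i, j).
     colloc_entry_at (\<lambda>k. eta1 k *\<^sub>R vector [1, 0]) (\<lambda>k. eta2 k *\<^sub>R vector [1, 0])
       (\<lambda>_. vector [0, s]) (eta3 *\<^sub>R vector [1, 0]) xi lam i j)"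

lemma sum_lessThan_15:
  "(\<Sum>j<15::nat. f j) = f 0 + f 1 + f 2 + f 3 + f 4 + f 5 + f 6 + f 7 + f 8 + f 9 + f 10 + f 11 + f 12 + f 13 + (f 14 :: real)"
  by (simp add: eval_nat_numeral)

lemma colloc_limit_matrix_kernel:
  assumes eta1: "eta1 0 \<noteq> eta1 1" "eta1 0 \<noteq> eta1 2" "eta1 1 \<noteq> eta1 2"
    and eta2: "eta2 0 \<noteq> eta2 1" and s: "s \<noteq> 0" and xi: "\<not> collinear {xi 0, xi 1, xi 2}"
    and eq: "\<And>i. i < 15 \<Longrightarrow> (\<Sum>j<15. colloc_limit_matrix lam eta1 eta2 eta3 xi s $$ (i, j) * w j) = 0"
  shows "\<forall>j<15. w j = 0"
proof -
  (* w (2j - 2) and w (2j - 1) are the components of c_j; w 12, w 13, w 14 are d_1, d_2, d_3. *)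
  note row = eq[unfolded sum_lessThan_15, simplified colloc_limit_matrix_def colloc_entry_at_def
      Let_def phi_def dphi_def lapphi_def cmp_def vector_2]
  have dirichlet: "w 0 + eta1 k * w 2 + (eta1 k)\<^sup>2 * w 6 = 0" "w 1 + eta1 k * w 3 + (eta1 k)\<^sup>2 * w 7 = 0"
    if "k < 3" for k
    using row[of "2 * k"] row[of "2 * k + 1"] that by simp_all
  have traction: "s * (w 3 + w 4 + 2 * eta2 k * w 7 + eta2 k * w 10) = 0"
      "s * (2 * w 5 - w 12 + eta2 k * (2 * w 11 - w 13)) = 0"
    if "k < 2" for k
    using that row[of 6] row[of 7] row[of 8] row[of 9] by (auto simp: less_2_cases_iff algebra_simps)
  have momentum: "(2 - lam * eta3\<^sup>2) * w 6 + 2 * w 8 - lam * (w 0 + eta3 * w 2) = w 13"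
      "(2 - lam * eta3\<^sup>2) * w 7 + 2 * w 9 - lam * (w 1 + eta3 * w 3) = w 14"
    using row[of 10] row[of 11] by (simp_all add: algebra_simps)
  have divergence: "w 2 + w 5 + (2 * w 6 + w 11) * xi k $ 1 + (2 * w 9 + w 10) * xi k $ 2 = 0"
    if "k < 3" for k
    using row[of "12 + k"] that by (simp add: algebra_simps)
  have c1_c2_c4: "w 0 = 0 \<and> w 2 = 0 \<and> w 6 = 0" "w 1 = 0 \<and> w 3 = 0 \<and> w 7 = 0"
    by (rule quadratic_zero_at_three_points[OF eta1 dirichlet(1)[of 0] dirichlet(1)[of 1] dirichlet(1)[of 2]]
          quadratic_zero_at_three_points[OF eta1 dirichlet(2)[of 0] dirichlet(2)[of 1] dirichlet(2)[of 2]];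
        simp)+
  have traction_reduced: "w 4 + eta2 k * w 10 = 0" "2 * w 5 - w 12 + eta2 k * (2 * w 11 - w 13) = 0"
    if "k < 2" for k
    using traction[OF that] s c1_c2_c4 by simp_all
  have c3_c6: "w 4 = 0 \<and> w 10 = 0" and d1_d2: "2 * w 5 - w 12 = 0 \<and> 2 * w 11 - w 13 = 0"
    by (rule affine_zero_at_two_points[OF eta2 traction_reduced(1)[of 0] traction_reduced(1)[of 1]]
          affine_zero_at_two_points[OF eta2 traction_reduced(2)[of 0] traction_reduced(2)[of 1]]; simp)+
  have "\<forall>p\<in>{xi 0, xi 1, xi 2}. (w 2 + w 5) + (2 * w 6 + w 11) * p$1 + (2 * w 9 + w 10) * p$2 = 0"
    using divergence[of 0] divergence[of 1] divergence[of 2] by (auto simp: algebra_simps)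
  with xi have "w 2 + w 5 = 0 \<and> 2 * w 6 + w 11 = 0 \<and> 2 * w 9 + w 10 = 0"
    by (intro affine_zero_on_noncollinear) (auto simp: algebra_simps)
  with c1_c2_c4 c3_c6 d1_d2 momentum have "w j = 0" if "j \<in> {5, 8, 9, 11, 12, 13, 14}" for j
    using that by auto
  with c1_c2_c4 c3_c6 show ?thesis
    by (auto simp: less_Suc_eq numeral_eq_Suc)
qed

lemma det_colloc_limit_matrix_ne_0:
  assumes "eta1 0 \<noteq> eta1 1" "eta1 0 \<noteq> eta1 2" "eta1 1 \<noteq> eta1 2"
    and "eta2 0 \<noteq> eta2 1" and "s \<noteq> 0" and "\<not> collinear {xi 0, xi 1, xi 2}"
  shows "Determinant.det (colloc_limit_matrix lam eta1 eta2 eta3 xi s) \<noteq> 0"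
proof
  let ?M = "colloc_limit_matrix lam eta1 eta2 eta3 xi s"
  have M: "?M \<in> carrier_mat 15 15" by (simp add: colloc_limit_matrix_def)
  assume "Determinant.det ?M = 0"
  then obtain v where v: "v \<in> carrier_vec 15" "v \<noteq> 0\<^sub>v 15" "?M *\<^sub>v v = 0\<^sub>v 15"
    using det_0_iff_vec_prod_zero[OF M] by blast
  have "(\<Sum>j<15. ?M $$ (i, j) * v $ j) = 0" if "i < 15" for i
  proof -
    have "(?M *\<^sub>v v) $ i = 0" using v(3) that by simp
    with that M v(1) show ?thesis by (simp add: scalar_prod_def atLeast0LessThan)
  qed
  with assms have "\<forall>j<15. v $ j = 0" by (rule colloc_limit_matrix_kernel)
  with v(1,2) show False by (auto intro: eq_vecI)
qed

lemma tendsto_If_const: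
  "(c \<Longrightarrow> (f \<longlongrightarrow> a) F) \<Longrightarrow> (\<not> c \<Longrightarrow> (g \<longlongrightarrow> b) F) \<Longrightarrow>
   ((\<lambda>x. if c then f x else g x) \<longlongrightarrow> (if c then a else b)) F"
  by (cases c) auto

lemma tendsto_colloc_entry_at:
  assumes "\<And>k. ((\<lambda>x. p1 x k) \<longlongrightarrow> P1 k) F" "\<And>k. ((\<lambda>x. p2 x k) \<longlongrightarrow> P2 k) F"
    "\<And>k. ((\<lambda>x. n2 x k) \<longlongrightarrow> N2 k) F" "(p3 \<longlongrightarrow> P3) F" "\<And>k. ((\<lambda>x. p4 x k) \<longlongrightarrow> P4 k) F"
  shows "((\<lambda>x. colloc_entry_at (p1 x) (p2 x) (n2 x) (p3 x) (p4 x) lam i j)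
           \<longlongrightarrow> colloc_entry_at P1 P2 N2 P3 P4 lam i j) F"
  unfolding colloc_entry_at_def Let_def lapphi_def phi_def dphi_def cmp_def
  by (intro tendsto_If_const tendsto_intros tendsto_vec_nth assms)

lemma tendsto_rescaled_curve:
  fixes X :: "real \<Rightarrow> 'a::real_normed_vector"
  assumes "(X has_vector_derivative V) (at 0)" "X 0 = 0"
  shows "((\<lambda>R. (1/R) *\<^sub>R X (e * R)) \<longlongrightarrow> e *\<^sub>R V) (at_right 0)"
proof -
  have "((\<lambda>R. X (e * R)) has_derivative (\<lambda>h. (e * h) *\<^sub>R V)) (at 0 within {0<..})"
    using has_derivative_compose[of "\<lambda>R. e * R" "\<lambda>h. e * h" 0 "{0<..}" X "\<lambda>h. h *\<^sub>R V"] assms(1)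
    by (simp add: has_vector_derivative_def has_derivative_at_withinI derivative_intros)
  then have "((\<lambda>R. (1 / norm (R - 0)) *\<^sub>R (X (e * R) - (X (e * 0) + (e * (R - 0)) *\<^sub>R V))) \<longlongrightarrow> 0)
      (at_right 0)"
    unfolding has_derivative_within by blast
  then have "((\<lambda>R. (1/R) *\<^sub>R X (e * R) - e *\<^sub>R V) \<longlongrightarrow> 0) (at_right 0)"
  proof (rule Lim_transform_eventually)
    show "\<forall>\<^sub>F R in at_right 0. (1 / norm (R - 0)) *\<^sub>R (X (e * R) - (X (e * 0) + (e * (R - 0)) *\<^sub>R V))
        = (1/R) *\<^sub>R X (e * R) - e *\<^sub>R V"
      using eventually_at_right_less[of 0] by eventually_elim (simp add: assms(2) algebra_simps)
  qed
  then show ?thesis by (rule Lim_null[THEN iffD2])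
qed

lemma tendsto_colloc_matrix:
  fixes X nn :: "real \<Rightarrow> real^2"
  assumes dX: "(X has_vector_derivative vector [1, 0]) (at 0)" and X0: "X 0 = 0"
    and nn: "isCont nn 0" "nn 0 = vector [0, s]" and ij: "i < 15" "j < 15"
  shows "((\<lambda>R. colloc_matrix X nn lam eta1 eta2 eta3 xi R $$ (i, j))
           \<longlongrightarrow> colloc_limit_matrix lam eta1 eta2 eta3 xi s $$ (i, j)) (at_right 0)"
  unfolding colloc_matrix_def colloc_limit_matrix_def index_mat(1)[OF ij] split colloc_entry_eq_at
proof (intro tendsto_colloc_entry_at tendsto_rescaled_curve[OF dX X0])
  fix k
  have "((\<lambda>R. eta2 k * R) \<longlongrightarrow> 0) (at_right 0)"
    by (rule tendsto_mult_right_zero[OF tendsto_ident_at])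
  with nn show "((\<lambda>R. nn (eta2 k * R)) \<longlongrightarrow> vector [0, s]) (at_right 0)"
    using isCont_tendsto_compose by fastforce
  have "\<forall>\<^sub>F R in at_right 0. (1/R) *\<^sub>R (R *\<^sub>R xi k) = xi k"
    using eventually_at_right_less[of 0] by eventually_elim simp
  then show "((\<lambda>R. (1/R) *\<^sub>R (R *\<^sub>R xi k)) \<longlongrightarrow> xi k) (at_right 0)"
    by (rule tendsto_eventually)
qed

lemma tendsto_det:
  fixes A :: "'a \<Rightarrow> 'b::{comm_ring_1, real_normed_algebra} mat"
  assumes A: "\<And>x. A x \<in> carrier_mat n n" and L: "L \<in> carrier_mat n n"
    and lim: "\<And>i j. i < n \<Longrightarrow> j < n \<Longrightarrow> ((\<lambda>x. A x $$ (i, j)) \<longlongrightarrow> L $$ (i, j)) F"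
  shows "((\<lambda>x. Determinant.det (A x)) \<longlongrightarrow> Determinant.det L) F"
  unfolding Determinant.det_def'[OF A] Determinant.det_def'[OF L]
proof (intro tendsto_sum tendsto_mult tendsto_const tendsto_prod)
  fix p i assume "p \<in> {p. p permutes {0..<n}}" "i \<in> {0..<n}"
  then have "p i < n" using permutes_in_image[of p "{0..<n}" i] by auto
  with \<open>i \<in> {0..<n}\<close> show "((\<lambda>x. A x $$ (i, p i)) \<longlongrightarrow> L $$ (i, p i)) F" by (simp add: lim)
qed

lemma tendsto_adj_mat:
  fixes A :: "'a \<Rightarrow> 'b::{comm_ring_1, real_normed_algebra} mat"
  assumes A: "\<And>x. A x \<in> carrier_mat n n" and L: "L \<in> carrier_mat n n"
    and lim: "\<And>i j. i < n \<Longrightarrow> j < n \<Longrightarrow> ((\<lambda>x. A x $$ (i, j)) \<longlongrightarrow> L $$ (i, j)) F"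
    and ij: "i < n" "j < n"
  shows "((\<lambda>x. adj_mat (A x) $$ (i, j)) \<longlongrightarrow> adj_mat L $$ (i, j)) F"
proof -
  have dims: "dim_row (A x) = n" "dim_col (A x) = n" "dim_row L = n" "dim_col L = n" for x
    using A L by auto
  have "((\<lambda>x. Determinant.det (mat_delete (A x) j i)) \<longlongrightarrow> Determinant.det (mat_delete L j i)) F"
  proof (rule tendsto_det)
    show "\<And>x. mat_delete (A x) j i \<in> carrier_mat (n - 1) (n - 1)" "mat_delete L j i \<in> carrier_mat (n - 1) (n - 1)"
      using A L mat_delete_carrier by blast+
    fix i' j' assume "i' < n - 1" "j' < n - 1"
    then show "((\<lambda>x. mat_delete (A x) j i $$ (i', j')) \<longlongrightarrow> mat_delete L j i $$ (i', j')) F"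
      by (simp add: mat_delete_def dims lim)
  qed
  then have "((\<lambda>x. cofactor (A x) j i) \<longlongrightarrow> cofactor L j i) F"
    unfolding cofactor_def by (intro tendsto_intros)
  with ij show ?thesis by (simp add: adj_mat_def dims)
qed

lemma adj_mat_inverse:
  fixes A :: "'a::field mat"
  assumes A: "A \<in> carrier_mat n n" and det: "Determinant.det A \<noteq> 0"
  shows "A * ((1 / Determinant.det A) \<cdot>\<^sub>m adj_mat A) = 1\<^sub>m n"
    and "((1 / Determinant.det A) \<cdot>\<^sub>m adj_mat A) * A = 1\<^sub>m n"
proof -
  have cancel: "(1 / Determinant.det A) \<cdot>\<^sub>m (Determinant.det A \<cdot>\<^sub>m 1\<^sub>m n) = 1\<^sub>m n"
    using det by (intro eq_matI) auto
  show "A * ((1 / Determinant.det A) \<cdot>\<^sub>m adj_mat A) = 1\<^sub>m n"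
    using cancel by (simp add: mult_smult_distrib[OF A adj_mat(1)[OF A]] adj_mat(2)[OF A])
  show "((1 / Determinant.det A) \<cdot>\<^sub>m adj_mat A) * A = 1\<^sub>m n"
    using cancel by (simp add: mult_smult_assoc_mat[OF adj_mat(1)[OF A] A] adj_mat(3)[OF A])
qed

lemma row_sum_le_norm_inf_mat:
  "i < dim_row B \<Longrightarrow> (\<Sum>j<dim_col B. \<bar>B $$ (i, j)\<bar>) \<le> norm_inf_mat B"
  unfolding norm_inf_mat_def by (rule Max_ge) auto

lemma norm_inf_mat_le:
  assumes "0 < dim_row B" and "\<And>i. i < dim_row B \<Longrightarrow> (\<Sum>j<dim_col B. \<bar>B $$ (i, j)\<bar>) \<le> C"
  shows "norm_inf_mat B \<le> C"
  unfolding norm_inf_mat_def using assms by (subst Max_le_iff) auto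

lemma eventually_bounded_inverse:
  fixes A :: "'a \<Rightarrow> real mat"
  assumes A: "\<And>x. A x \<in> carrier_mat n n" and L: "L \<in> carrier_mat n n" "Determinant.det L \<noteq> 0"
    and n: "0 < n"
    and lim: "\<And>i j. i < n \<Longrightarrow> j < n \<Longrightarrow> ((\<lambda>x. A x $$ (i, j)) \<longlongrightarrow> L $$ (i, j)) F"
  shows "\<exists>C. \<forall>\<^sub>F x in F. \<exists>B. B \<in> carrier_mat n n \<and> A x * B = 1\<^sub>m n \<and> B * A x = 1\<^sub>m n
                              \<and> norm_inf_mat B \<le> C"
proof -
  define minv where "minv M = (1 / Determinant.det M) \<cdot>\<^sub>m adj_mat M" for M :: "real mat"
  have minv_carrier: "minv M \<in> carrier_mat n n" if "M \<in> carrier_mat n n" for M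
    using adj_mat(1)[OF that] by (simp add: minv_def)
  have minv_entry: "minv M $$ (i, j) = adj_mat M $$ (i, j) / Determinant.det M"
    if "M \<in> carrier_mat n n" "i < n" "j < n" for M i j
    using adj_mat(1)[OF that(1)] that(2,3) by (simp add: minv_def)
  have lim_det: "((\<lambda>x. Determinant.det (A x)) \<longlongrightarrow> Determinant.det L) F"
    using A L(1) lim by (rule tendsto_det)
  have "\<forall>\<^sub>F x in F. \<bar>minv (A x) $$ (i, j)\<bar> \<le> \<bar>minv L $$ (i, j)\<bar> + 1" if "i < n" "j < n" for i j
  proof -
    have "((\<lambda>x. minv (A x) $$ (i, j)) \<longlongrightarrow> minv L $$ (i, j)) F"
      unfolding minv_entry[OF A that] minv_entry[OF L(1) that]
      by (intro tendsto_divide tendsto_adj_mat[OF A L(1) lim that] lim_det L(2))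
    then have "\<forall>\<^sub>F x in F. dist (minv (A x) $$ (i, j)) (minv L $$ (i, j)) < 1"
      by (rule tendstoD) simp
    then show ?thesis by eventually_elim (auto simp: dist_real_def)
  qed
  then have "\<forall>\<^sub>F x in F. \<forall>i\<in>{..<n}. \<forall>j\<in>{..<n}. \<bar>minv (A x) $$ (i, j)\<bar> \<le> \<bar>minv L $$ (i, j)\<bar> + 1"
    by (intro eventually_ball_finite ballI) auto
  moreover have "\<forall>\<^sub>F x in F. Determinant.det (A x) \<noteq> 0"
    using lim_det L(2) by (rule tendsto_imp_eventually_ne)
  ultimately have "\<forall>\<^sub>F x in F. \<exists>B. B \<in> carrier_mat n n \<and> A x * B = 1\<^sub>m n \<and> B * A x = 1\<^sub>m n
                              \<and> norm_inf_mat B \<le> norm_inf_mat (minv L) + n"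
  proof eventually_elim
    case (elim x)
    have B: "minv (A x) \<in> carrier_mat n n" by (rule minv_carrier[OF A])
    have "norm_inf_mat (minv (A x)) \<le> norm_inf_mat (minv L) + n"
    proof (rule norm_inf_mat_le)
      fix i assume "i < dim_row (minv (A x))"
      with B have i: "i < n" by simp
      have "(\<Sum>j<n. \<bar>minv (A x) $$ (i, j)\<bar>) \<le> (\<Sum>j<n. \<bar>minv L $$ (i, j)\<bar> + 1)"
        using elim(1) i by (intro sum_mono) auto
      also have "\<dots> \<le> norm_inf_mat (minv L) + n"
        using row_sum_le_norm_inf_mat[of i "minv L"] minv_carrier[OF L(1)] i by (simp add: sum.distrib)
      finally show "(\<Sum>j<dim_col (minv (A x)). \<bar>minv (A x) $$ (i, j)\<bar>) \<le> norm_inf_mat (minv L) + n"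
        using B by simp
    qed (use B n in simp)
    with elim(2) show ?case
      using B adj_mat_inverse[OF A] unfolding minv_def by blast
  qed
  then show ?thesis by blast
qed

lemma eventually_at_right_0_le:
  fixes P :: "real \<Rightarrow> bool"
  assumes "eventually P (at_right 0)"
  shows "\<exists>R0>0. \<forall>R. 0 < R \<and> R \<le> R0 \<longrightarrow> P R"
proof -
  from assms obtain b where "b > 0" "\<forall>R>0. R < b \<longrightarrow> P R"
    unfolding eventually_at_right_field by auto
  then show ?thesis by (intro exI[of _ "b / 2"]) auto
qed

theorem mainTheorem4:
  fixes X X' X'' nn :: "real \<Rightarrow> real^2" and a b lam eta3 :: real
    and eta1 eta2 :: "nat \<Rightarrow> real" and xi :: "nat \<Rightarrow> real^2"
  assumes dom: "a < 0" "0 < b"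
    and C2: "\<forall>s\<in>{a<..<b}. (X has_vector_derivative X' s) (at s)
                             \<and> (X' has_vector_derivative X'' s) (at s)"
    and C2cont: "continuous_on {a<..<b} X''"
    and arclength: "\<forall>s\<in>{a<..<b}. norm (X' s) = 1"
    and X0: "X 0 = 0" and dX0: "X' 0 = vector [1, 0]"
    and normal: "\<forall>s\<in>{a<..<b}. norm (nn s) = 1 \<and> nn s \<bullet> X' s = 0"
    and normal_cont: "continuous_on {a<..<b} nn"
    and lam: "lam \<ge> 0"
    and eta1_distinct: "\<forall>k<3. \<forall>l<3. k \<noteq> l \<longrightarrow> eta1 k \<noteq> eta1 l"
    and eta2_distinct: "eta2 0 \<noteq> eta2 1"
    and xi_noncollinear: "\<not> collinear {xi 0, xi 1, xi 2}"
    and in_O: "\<exists>R1>0. \<forall>R. 0 < R \<and> R \<le> R1 \<longrightarrow>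
        (\<forall>k<3. eta1 k * R \<in> {a<..<b} \<and> X (eta1 k * R) \<in> ball 0 R)
      \<and> (\<forall>k<2. eta2 k * R \<in> {a<..<b} \<and> X (eta2 k * R) \<in> ball 0 R)
      \<and> eta3 * R \<in> {a<..<b} \<and> X (eta3 * R) \<in> ball 0 R
      \<and> (\<forall>k<3. R *\<^sub>R xi k \<in> ball 0 R)"
  shows "\<exists>R0>0. \<exists>C. \<forall>R. 0 < R \<and> R \<le> R0 \<longrightarrow>
           (\<exists>B. B \<in> carrier_mat 15 15
              \<and> colloc_matrix X nn lam eta1 eta2 eta3 xi R * B = 1\<^sub>m 15
              \<and> B * colloc_matrix X nn lam eta1 eta2 eta3 xi R = 1\<^sub>m 15
              \<and> norm_inf_mat B \<le> C)"
proof -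
  have zero_in: "0 \<in> {a<..<b}" using dom by simp
  with C2 have dX: "(X has_vector_derivative vector [1, 0]) (at 0)" unfolding dX0[symmetric] by blast
  from normal_cont zero_in have "isCont nn 0" by (simp add: continuous_on_eq_continuous_at)
  define s where "s = nn 0 $ 2"
  from normal zero_in have "norm (nn 0) = 1" "nn 0 \<bullet> vector [1, 0] = 0"
    unfolding dX0[symmetric] by auto
  then have "nn 0 \<noteq> 0" "nn 0 $ 1 = 0"
    by (auto simp: inner_vec_def sum_2 vector_2)
  then have nn0: "nn 0 = vector [0, s]" and "s \<noteq> 0"
    by (auto simp: s_def Finite_Cartesian_Product.vec_eq_iff forall_2 vector_2)
  let ?M = "colloc_matrix X nn lam eta1 eta2 eta3 xi"
  let ?L = "colloc_limit_matrix lam eta1 eta2 eta3 xi s"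
  have carrier: "\<And>R. ?M R \<in> carrier_mat 15 15" "?L \<in> carrier_mat 15 15"
    by (simp_all add: colloc_matrix_def colloc_limit_matrix_def)
  have "Determinant.det ?L \<noteq> 0"
    using eta1_distinct eta2_distinct \<open>s \<noteq> 0\<close> xi_noncollinear
    by (intro det_colloc_limit_matrix_ne_0) auto
  moreover have "((\<lambda>R. ?M R $$ (i, j)) \<longlongrightarrow> ?L $$ (i, j)) (at_right 0)" if "i < 15" "j < 15" for i j
    using dX X0 \<open>isCont nn 0\<close> nn0 that by (rule tendsto_colloc_matrix)
  ultimately obtain C where "\<forall>\<^sub>F R in at_right 0. \<exists>B. B \<in> carrier_mat 15 15
      \<and> ?M R * B = 1\<^sub>m 15 \<and> B * ?M R = 1\<^sub>m 15 \<and> norm_inf_mat B \<le> C"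
    using eventually_bounded_inverse[of ?M 15 ?L "at_right 0", OF carrier] by auto
  from eventually_at_right_0_le[OF this] show ?thesis
    by (elim exE conjE) (intro exI conjI; assumption)
qed

end
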